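(* Let $A\in\mathrm{Seq}_{r,t}$ and let $i$ be an index with $a_i\neq a_{i+1}$. Then there is a power series $W_i^{(A)}(u)\in\mathbb C[y_1,\dots,y_{i-1}][[u^{-1}]]$ such that $$e_i^{(A)}\frac{1}{u-y_i}e_i^{(A)}=\frac{W_i^{(A)}(u)}{u}e_i^{(A)}$$ in $\operatorname{End}(A)[[u^{-1}]]$. Moreover $W_i^{(A)}$ depends only on $(a_1,\dots,a_i)$: if $A,A'\in\mathrm{Seq}_{r,t}$ with $a_i\ne a_{i+1}$, $a'_i\neq a'_{i+1}$ and $a_j=a'_j$ for all $j\le i$, then $W_i^{(A)}=W_i^{(A')}$.
   Context: Let $r,t\in\mathbb N$. An $(r,t)$-sequence is a sequence $A=(a_1,\dots,a_{r+t})$ that is a permutation of $(1,\dots,1,-1,\dots,-1)$ ($r$ entries $1$, $t$ entries $-1$); $\mathrm{Seq}_{r,t}$ is the set of these, and the simple transpositions $\mathsf s_j=(j,j+1)$ of $S_{r+t}$ act on it by permuting entries. Fix complex numbers $\boldsymbol\omega=(\omega_k)_{k\in\mathbb N}$. The degenerate affine walled Brauer category $\underline{\mathrm{VB}}_{r,t}(\boldsymbol\omega)$ is the $\mathbb C$-linear category with object set $\mathrm{Seq}_{r,t}$ whose morphisms are generated by: endomorphisms $s_i^{(A)}$ of $A$ for $1\le i\le r+t-1$ with $a_i=a_{i+1}$; endomorphisms $e_i^{(A)}$ of $A$ for $1\le i\le r+t-1$ with $a_i\neq a_{i+1}$; endomorphisms $y_i^{(A)}$ of $A$ for $1\le i\le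 r+t$; and morphisms $\hat s_j^{(A)},\hat e_j^{(A)}:A\to\mathsf s_jA$ whenever $\mathsf s_jA\ne A$. Superscripts are usually omitted; composition $fg$ means $g$ first. A symbol $\dot s_i$ stands for $s_i$ or $\hat s_i$ and $\dot e_i$ for $e_i$ or $\hat e_i$; each relation is imposed for all objects and all choices of dotted symbols (possibly different on the two sides) for which both sides are defined morphisms with the same source and target. Relations: (1) $\dot s_i\dot s_i=1$; (2) $\dot s_i\dot s_j=\dot s_j\dot s_i$ for $|i-j|>1$, $\dot s_i\dot s_{i+1}\dot s_i=\dot s_{i+1}\dot s_i\dot s_{i+1}$, $\dot s_iy_j=y_j\dot s_i$ for $j\ne i,i+1$; (3) $(e_i^{(A)})^2=\omega_0e_i^{(A)}$; (4) $e_1^{(A)}y_1^ke_1^{(A)}=\omega_ke_1^{(A)}$ for all $k\in\mathbb N$ when $a_1=1,a_2=-1$; (5) $\dot s_i\dot e_j=\dot e_j\dot s_i$ and $\dot e_i\dot e_j=\dot e_j\dot e_i$ for $|i-j|>1$, $\dot e_iy_j=y_j\dot e_i$ for $j\neq i,i+1$, $y_iy_j=y_jy_i$; (6) $\hat s_i\dot e_i=\dot e_i=\dot e_i\hat s_i$, $\dot s_i\dot e_{i+1}\dot e_i=\dot s_{i+1}\dot e_i$, $\dot e_i\dot e_{i+1}\dot s_i=\dot e_i\dot s_{i+1}$, $\dot e_{i+1}\dot e_i\dot s_{i+1}=\dot e_{i+1}\dot s_i$, $\dot s_{i+1}\dot e_i\dot e_{i+1}=\dot s_i\dot e_{i+1}$,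 $\dot e_{i+1}\dot e_i\dot e_{i+1}=\dot e_{i+1}$, $\dot e_i\dot e_{i+1}\dot e_i=\dot e_i$; (7) $s_iy_i-y_{i+1}s_i=-1$, $s_iy_{i+1}-y_is_i=1$, $\hat s_iy_i-y_{i+1}\hat s_i=\hat e_i$, $\hat s_iy_{i+1}-y_i\hat s_i=-\hat e_i$; (8) $\dot e_i(y_i+y_{i+1})=0=(y_i+y_{i+1})\dot e_i$. Power series: $u$ is a formal variable; one works in $\operatorname{End}(A)[[u^{-1}]]$, with $\frac1{u-y}:=\sum_{k\ge0}y^ku^{-k-1}$. *)

theory Defs
  imports Complex_Main
begin

text \<open>Objects: (r,t)-sequences, as integer lists with entries 1 / -1; entry a_i is A ! (i-1).\<close>

definition Seq :: "nat \<Rightarrow> nat \<Rightarrow> int list set" where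
  "Seq r t = {A. length A = r + t \<and> set A \<subseteq> {1, -1} \<and> length (filter (\<lambda>x. x = 1) A) = r}"

text \<open>The action of the simple transposition s_j = (j, j+1) on a sequence (1-based j).\<close>
definition swp :: "nat \<Rightarrow> int list \<Rightarrow> int list" where
  "swp j A = A[j - 1 := A ! j, j := A ! (j - 1)]"

text \<open>The category is encoded by its
  path algebra (direct sum of all Hom spaces, composition of non-composable morphisms
  being zero), with the identities Idm A as orthogonal idempotents.
  Sg A i = s_i^(A), Eg A i = e_i^(A), Yg A i = y_i^(A),
  SHg A j = hat s_j^(A) : A -> s_j A, EHg A j = hat e_j^(A) : A -> s_j A.
  Comp f g means f g (g first).\<close>
datatype tm =
    Idm "int list"
  | Sg "int list" nat
  | Eg "int list" nat
  | Yg "int list" nat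
  | SHg "int list" nat
  | EHg "int list" nat
  | Comp tm tm
  | Add tm tm
  | Smul complex tm
  | Zer

fun gen_ok :: "nat \<Rightarrow> nat \<Rightarrow> tm \<Rightarrow> bool" where
  "gen_ok r t (Idm A) = (A \<in> Seq r t)"
| "gen_ok r t (Sg A i) = (A \<in> Seq r t \<and> 1 \<le> i \<and> i < r + t \<and> A ! (i - 1) = A ! i)"
| "gen_ok r t (Eg A i) = (A \<in> Seq r t \<and> 1 \<le> i \<and> i < r + t \<and> A ! (i - 1) \<noteq> A ! i)"
| "gen_ok r t (Yg A i) = (A \<in> Seq r t \<and> 1 \<le> i \<and> i \<le> r + t)"
| "gen_ok r t (SHg A i) = (A \<in> Seq r t \<and> 1 \<le> i \<and> i < r + t \<and> swp i A \<noteq> A)"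
| "gen_ok r t (EHg A i) = (A \<in> Seq r t \<and> 1 \<le> i \<and> i < r + t \<and> swp i A \<noteq> A)"
| "gen_ok r t _ = True"

text \<open>Letters for monomial relations: LS i = dotted s_i, LSH i = hat s_i,
  LE i = dotted e_i, LY j = y_j.\<close>
datatype letter = LS nat | LSH nat | LE nat | LY nat

fun step :: "nat \<Rightarrow> letter \<Rightarrow> int list \<Rightarrow> int list \<Rightarrow> tm \<Rightarrow> bool" where
  "step n (LS i) X Z g = (1 \<le> i \<and> i < n \<and> Z = swp i X \<and>
      g = (if X ! (i - 1) = X ! i then Sg X i else SHg X i))"
| "step n (LSH i) X Z g = (1 \<le> i \<and> i < n \<and> X ! (i - 1) \<noteq> X ! i \<and> Z = swp i X \<and> g = SHg X i)"
| "step n (LE i) X Z g = (1 \<le> i \<and> i < n \<and> X ! (i - 1) \<noteq> X ! i \<and>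
      ((Z = X \<and> g = Eg X i) \<or> (Z = swp i X \<and> g = EHg X i)))"
| "step n (LY j) X Z g = (1 \<le> j \<and> j \<le> n \<and> Z = X \<and> g = Yg X j)"

text \<open>wmor r t w X Z m: the word w (written as composition l1 l2 ... ln, ln applied first)
  is realised as a defined morphism m from X to Z (for some choice of dotted symbols).\<close>
inductive wmor :: "nat \<Rightarrow> nat \<Rightarrow> letter list \<Rightarrow> int list \<Rightarrow> int list \<Rightarrow> tm \<Rightarrow> bool"
  for r t where
  wnil: "X \<in> Seq r t \<Longrightarrow> wmor r t [] X X (Idm X)"
| wcons: "wmor r t w X Y m \<Longrightarrow> step (r + t) l Y Z g \<Longrightarrow> wmor r t (l # w) X Z (Comp g m)"

definition monrel :: "nat \<Rightarrow> nat \<Rightarrow> letter list \<Rightarrow> letter list \<Rightarrow> tm \<Rightarrow> tm \<Rightarrow> bool" where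
  "monrel r t w1 w2 m1 m2 = (\<exists>X Z. wmor r t w1 X Z m1 \<and> wmor r t w2 X Z m2)"

text \<open>The monomial relations (1),(2),(5),(6), as pairs of words (all dotted choices).\<close>
inductive monpair :: "letter list \<Rightarrow> letter list \<Rightarrow> bool" where
  r1:  "monpair [LS i, LS i] []"
| r2a: "i + 1 < j \<or> j + 1 < i \<Longrightarrow> monpair [LS i, LS j] [LS j, LS i]"
| r2b: "monpair [LS i, LS (i + 1), LS i] [LS (i + 1), LS i, LS (i + 1)]"
| r2c: "j \<noteq> i \<Longrightarrow> j \<noteq> i + 1 \<Longrightarrow> monpair [LS i, LY j] [LY j, LS i]"
| r5a: "i + 1 < j \<or> j + 1 < i \<Longrightarrow> monpair [LS i, LE j] [LE j, LS i]"
| r5b: "i + 1 < j \<or> j + 1 < i \<Longrightarrow> monpair [LE i, LE j] [LE j, LE i]"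
| r5c: "j \<noteq> i \<Longrightarrow> j \<noteq> i + 1 \<Longrightarrow> monpair [LE i, LY j] [LY j, LE i]"
| r5d: "monpair [LY i, LY j] [LY j, LY i]"
| r6a: "monpair [LSH i, LE i] [LE i]"
| r6b: "monpair [LE i] [LE i, LSH i]"
| r6c: "monpair [LS i, LE (i + 1), LE i] [LS (i + 1), LE i]"
| r6d: "monpair [LE i, LE (i + 1), LS i] [LE i, LS (i + 1)]"
| r6e: "monpair [LE (i + 1), LE i, LS (i + 1)] [LE (i + 1), LS i]"
| r6f: "monpair [LS (i + 1), LE i, LE (i + 1)] [LS i, LE (i + 1)]"
| r6g: "monpair [LE (i + 1), LE i, LE (i + 1)] [LE (i + 1)]"
| r6h: "monpair [LE i, LE (i + 1), LE i] [LE i]"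

fun ypow :: "int list \<Rightarrow> nat \<Rightarrow> nat \<Rightarrow> tm" where
  "ypow A i 0 = Idm A"
| "ypow A i (Suc k) = Comp (Yg A i) (ypow A i k)"

inductive veq :: "nat \<Rightarrow> nat \<Rightarrow> (nat \<Rightarrow> complex) \<Rightarrow> tm \<Rightarrow> tm \<Rightarrow> bool"
  for r t \<omega> where
  refl: "veq r t \<omega> x x"
| sym: "veq r t \<omega> x y \<Longrightarrow> veq r t \<omega> y x"
| trans: "veq r t \<omega> x y \<Longrightarrow> veq r t \<omega> y z \<Longrightarrow> veq r t \<omega> x z"
| cong_comp: "veq r t \<omega> x x' \<Longrightarrow> veq r t \<omega> y y' \<Longrightarrow> veq r t \<omega> (Comp x y) (Comp x' y')"
| cong_add: "veq r t \<omega> x x' \<Longrightarrow> veq r t \<omega> y y' \<Longrightarrow> veq r t \<omega> (Add x y) (Add x' y')"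
| cong_smul: "veq r t \<omega> x x' \<Longrightarrow> veq r t \<omega> (Smul c x) (Smul c x')"
| add_assoc: "veq r t \<omega> (Add (Add x y) z) (Add x (Add y z))"
| add_comm: "veq r t \<omega> (Add x y) (Add y x)"
| add_zero: "veq r t \<omega> (Add x Zer) x"
| add_neg: "veq r t \<omega> (Add x (Smul (-1) x)) Zer"
| smul_add: "veq r t \<omega> (Smul c (Add x y)) (Add (Smul c x) (Smul c y))"
| add_smul: "veq r t \<omega> (Smul (c + d) x) (Add (Smul c x) (Smul d x))"
| smul_smul: "veq r t \<omega> (Smul c (Smul d x)) (Smul (c * d) x)"
| smul_one: "veq r t \<omega> (Smul 1 x) x"
| comp_assoc: "veq r t \<omega> (Comp (Comp x y) z) (Comp x (Comp y z))"
| comp_addR: "veq r t \<omega> (Comp x (Add y z)) (Add (Comp x y) (Comp x z))"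
| comp_addL: "veq r t \<omega> (Comp (Add x y) z) (Add (Comp x z) (Comp y z))"
| comp_smulR: "veq r t \<omega> (Comp x (Smul c y)) (Smul c (Comp x y))"
| comp_smulL: "veq r t \<omega> (Comp (Smul c x) y) (Smul c (Comp x y))"
| bad_gen: "\<not> gen_ok r t g \<Longrightarrow> veq r t \<omega> g Zer"
| id_idem: "veq r t \<omega> (Comp (Idm A) (Idm A)) (Idm A)"
| id_orth: "A \<noteq> B \<Longrightarrow> veq r t \<omega> (Comp (Idm A) (Idm B)) Zer"
| src_S: "veq r t \<omega> (Sg A i) (Comp (Idm A) (Comp (Sg A i) (Idm A)))"
| src_E: "veq r t \<omega> (Eg A i) (Comp (Idm A) (Comp (Eg A i) (Idm A)))"
| src_Y: "veq r t \<omega> (Yg A i) (Comp (Idm A) (Comp (Yg A i) (Idm A)))"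
| src_SH: "veq r t \<omega> (SHg A i) (Comp (Idm (swp i A)) (Comp (SHg A i) (Idm A)))"
| src_EH: "veq r t \<omega> (EHg A i) (Comp (Idm (swp i A)) (Comp (EHg A i) (Idm A)))"
| mon: "monpair w1 w2 \<Longrightarrow> monrel r t w1 w2 m1 m2 \<Longrightarrow> veq r t \<omega> m1 m2"
| rel3: "gen_ok r t (Eg A i) \<Longrightarrow> veq r t \<omega> (Comp (Eg A i) (Eg A i)) (Smul (\<omega> 0) (Eg A i))"
| rel4: "A \<in> Seq r t \<Longrightarrow> 2 \<le> r + t \<Longrightarrow> A ! 0 = 1 \<Longrightarrow> A ! 1 = -1 \<Longrightarrow>
     veq r t \<omega> (Comp (Eg A 1) (Comp (ypow A 1 k) (Eg A 1))) (Smul (\<omega> k) (Eg A 1))"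
| rel7a: "gen_ok r t (Sg A i) \<Longrightarrow>
     veq r t \<omega> (Add (Comp (Sg A i) (Yg A i)) (Smul (-1) (Comp (Yg A (i + 1)) (Sg A i))))
               (Smul (-1) (Idm A))"
| rel7b: "gen_ok r t (Sg A i) \<Longrightarrow>
     veq r t \<omega> (Add (Comp (Sg A i) (Yg A (i + 1))) (Smul (-1) (Comp (Yg A i) (Sg A i))))
               (Idm A)"
| rel7c: "gen_ok r t (SHg A i) \<Longrightarrow>
     veq r t \<omega> (Add (Comp (SHg A i) (Yg A i)) (Smul (-1) (Comp (Yg (swp i A) (i + 1)) (SHg A i))))
               (EHg A i)"
| rel7d: "gen_ok r t (SHg A i) \<Longrightarrow>
     veq r t \<omega> (Add (Comp (SHg A i) (Yg A (i + 1))) (Smul (-1) (Comp (Yg (swp i A) i) (SHg A i))))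
               (Smul (-1) (EHg A i))"
| rel8a: "gen_ok r t (Eg A i) \<Longrightarrow> veq r t \<omega> (Comp (Eg A i) (Add (Yg A i) (Yg A (i + 1)))) Zer"
| rel8b: "gen_ok r t (Eg A i) \<Longrightarrow> veq r t \<omega> (Comp (Add (Yg A i) (Yg A (i + 1))) (Eg A i)) Zer"
| rel8c: "gen_ok r t (EHg A i) \<Longrightarrow> veq r t \<omega> (Comp (EHg A i) (Add (Yg A i) (Yg A (i + 1)))) Zer"
| rel8d: "gen_ok r t (EHg A i) \<Longrightarrow>
     veq r t \<omega> (Comp (Add (Yg (swp i A) i) (Yg (swp i A) (i + 1))) (EHg A i)) Zer"

text \<open>Polynomials in y_1, y_2, ...: a list of (coefficient, exponent list), where the
  exponent list [k1, k2, ...] stands for y_1^k1 y_2^k2 ...  Evaluation as endomorphism of A.\<close>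
fun monoterm :: "int list \<Rightarrow> nat \<Rightarrow> nat list \<Rightarrow> tm" where
  "monoterm A j [] = Idm A"
| "monoterm A j (k # ks) = Comp (ypow A j k) (monoterm A (Suc j) ks)"

fun peval :: "int list \<Rightarrow> (complex \<times> nat list) list \<Rightarrow> tm" where
  "peval A [] = Zer"
| "peval A ((c, e) # ps) = Add (Smul c (monoterm A 1 e)) (peval A ps)"

end

theory Submission
  imports Defs "HOL-Library.Multiset"
begin

text \<open>
  For a cap e_i (that is, a_i \<noteq> a_(i+1)) one shows, by induction on i and then on k, that the
  bubble e_i y_i^k e_i equals P e_i for a polynomial P in y_1, ..., y_(i-1) depending only on
  (a_1, ..., a_i).  For i = 1 and a_1 = 1 this is relation (4).  If also a_(i-1) \<noteq> a_i, then
  T = hat-s_i s_(i-1) hat-s_i is an involution with e_i e_(i-1) = T e_(i-1), e_(i-1) e_i = e_(i-1) T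
  and T y_i T = y_i - e_i + e_(i-1); together with e_i = e_i e_(i-1) e_i this gives
    e_i y_i^k e_i = e_i e_(i-1) (y_i - e_i + e_(i-1))^k e_(i-1) e_i,
  and expanding the power with the help of e_j y_(j+1) = - e_j y_j leaves only bubbles
  e_(i-1) y_(i-1)^m e_(i-1) and e_i y_i^m e_i with m < k.  In the remaining cases (a_1 = -1, or
  a_(i-1) = a_i) conjugation by hat-s_i turns e_i into the cap e_i of s_i A, which is of one of the
  previous kinds, and y_i into y_(i+1) + e_i; expanding (y_(i+1) + e_i)^k again leaves only
  bubbles of s_i A.
\<close>

section \<open>The morphisms of VB_(r,t)(\<omega>) as a ring\<close>

text \<open>A quotient type cannot depend on \<open>(r, t, \<omega>)\<close>, so all path algebras are packed into one
  ring: its elements are families of terms indexed by the parameters, modulo \<open>veq\<close> in each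
  component.\<close>

type_synonym vb_param = "nat \<times> nat \<times> (nat \<Rightarrow> complex)"

definition vb_equiv :: "(vb_param \<Rightarrow> tm) \<Rightarrow> (vb_param \<Rightarrow> tm) \<Rightarrow> bool" where
  "vb_equiv f g \<longleftrightarrow> (\<forall>r t \<omega>. veq r t \<omega> (f (r, t, \<omega>)) (g (r, t, \<omega>)))"

lemma equivp_vb_equiv: "equivp vb_equiv"
  unfolding vb_equiv_def
  by (rule equivpI; unfold reflp_def symp_def transp_def; meson veq.refl veq.sym veq.trans)

quotient_type vbalg = "vb_param \<Rightarrow> tm" / vb_equiv
  by (rule equivp_vb_equiv)

instantiation vbalg :: ring
begin

lift_definition zero_vbalg :: vbalg is "\<lambda>p. Zer" .

lift_definition plus_vbalg :: "vbalg \<Rightarrow> vbalg \<Rightarrow> vbalg" is "\<lambda>f g p. Add (f p) (g p)"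
  by (auto simp: vb_equiv_def intro: veq.cong_add)

lift_definition uminus_vbalg :: "vbalg \<Rightarrow> vbalg" is "\<lambda>f p. Smul (-1) (f p)"
  by (auto simp: vb_equiv_def intro: veq.cong_smul)

lift_definition minus_vbalg :: "vbalg \<Rightarrow> vbalg \<Rightarrow> vbalg" is "\<lambda>f g p. Add (f p) (Smul (-1) (g p))"
  by (auto simp: vb_equiv_def intro!: veq.cong_add veq.cong_smul)

lift_definition times_vbalg :: "vbalg \<Rightarrow> vbalg \<Rightarrow> vbalg" is "\<lambda>f g p. Comp (f p) (g p)"
  by (auto simp: vb_equiv_def intro: veq.cong_comp)

instance
proof
  fix a b c :: vbalg
  show "a + b + c = a + (b + c)" by transfer (auto simp: vb_equiv_def intro: veq.add_assoc)
  show "a + b = b + a" by transfer (auto simp: vb_equiv_def intro: veq.add_comm)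
  show "0 + a = a"
    by transfer (auto simp: vb_equiv_def intro: veq.trans[OF veq.add_comm veq.add_zero])
  show "- a + a = 0"
    by transfer (auto simp: vb_equiv_def intro: veq.trans[OF veq.add_comm veq.add_neg])
  show "a - b = a + - b" by transfer (auto simp: vb_equiv_def intro: veq.refl)
  show "a * b * c = a * (b * c)" by transfer (auto simp: vb_equiv_def intro: veq.comp_assoc)
  show "(a + b) * c = a * c + b * c" by transfer (auto simp: vb_equiv_def intro: veq.comp_addL)
  show "a * (b + c) = a * b + a * c" by transfer (auto simp: vb_equiv_def intro: veq.comp_addR)
qed

end

lift_definition cscale :: "complex \<Rightarrow> vbalg \<Rightarrow> vbalg" is "\<lambda>c f p. Smul c (f p)"
  by (auto simp: vb_equiv_def intro: veq.cong_smul)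

interpretation cscale: module cscale
  by standard (transfer; auto simp: vb_equiv_def
      intro: veq.smul_add veq.add_smul veq.smul_smul veq.smul_one)+

lemma cscale_mult_left: "cscale c a * b = cscale c (a * b)"
  by transfer (auto simp: vb_equiv_def intro: veq.comp_smulL)

lemma cscale_mult_right: "a * cscale c b = cscale c (a * b)"
  by transfer (auto simp: vb_equiv_def intro: veq.comp_smulR)

definition vb_class :: "nat \<Rightarrow> nat \<Rightarrow> (nat \<Rightarrow> complex) \<Rightarrow> tm \<Rightarrow> vbalg" where
  "vb_class r t \<omega> x = abs_vbalg (\<lambda>p. if p = (r, t, \<omega>) then x else Zer)"

declare veq.trans [trans]

lemma veq_Zer_if_double: "veq r t \<omega> x (Add x x) \<Longrightarrow> veq r t \<omega> x Zer"
proof -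
  assume double: "veq r t \<omega> x (Add x x)"
  have "veq r t \<omega> Zer (Add x (Smul (-1) x))" by (rule veq.sym, rule veq.add_neg)
  also have "veq r t \<omega> \<dots> (Add (Add x x) (Smul (-1) x))"
    by (rule veq.cong_add[OF double veq.refl])
  also have "veq r t \<omega> \<dots> (Add x (Add x (Smul (-1) x)))" by (rule veq.add_assoc)
  also have "veq r t \<omega> \<dots> (Add x Zer)" by (rule veq.cong_add[OF veq.refl veq.add_neg])
  also have "veq r t \<omega> \<dots> x" by (rule veq.add_zero)
  finally show ?thesis by (rule veq.sym)
qed

lemma veq_Comp_Zer: "veq r t \<omega> (Comp Zer Zer) Zer"
proof (rule veq_Zer_if_double)
  have "veq r t \<omega> (Comp Zer Zer) (Comp Zer (Add Zer Zer))"
    by (rule veq.cong_comp[OF veq.refl veq.sym[OF veq.add_zero]])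
  also have "veq r t \<omega> \<dots> (Add (Comp Zer Zer) (Comp Zer Zer))" by (rule veq.comp_addR)
  finally show "veq r t \<omega> (Comp Zer Zer) (Add (Comp Zer Zer) (Comp Zer Zer))" .
qed

lemma veq_Smul_Zer: "veq r t \<omega> (Smul c Zer) Zer"
proof (rule veq_Zer_if_double)
  have "veq r t \<omega> (Smul c Zer) (Smul c (Add Zer Zer))"
    by (rule veq.cong_smul[OF veq.sym[OF veq.add_zero]])
  also have "veq r t \<omega> \<dots> (Add (Smul c Zer) (Smul c Zer))" by (rule veq.smul_add)
  finally show "veq r t \<omega> (Smul c Zer) (Add (Smul c Zer) (Smul c Zer))" .
qed

lemma vb_class_eq_iff: "vb_class r t \<omega> x = vb_class r t \<omega> y \<longleftrightarrow> veq r t \<omega> x y"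
  unfolding vb_class_def by (subst vbalg.abs_eq_iff) (auto simp: vb_equiv_def intro: veq.refl)

lemma vb_class_Comp: "vb_class r t \<omega> (Comp x y) = vb_class r t \<omega> x * vb_class r t \<omega> y"
  unfolding vb_class_def
  by (subst times_vbalg.abs_eq, subst vbalg.abs_eq_iff)
    (auto simp: vb_equiv_def intro: veq.refl veq.sym[OF veq_Comp_Zer])

lemma vb_class_Add: "vb_class r t \<omega> (Add x y) = vb_class r t \<omega> x + vb_class r t \<omega> y"
  unfolding vb_class_def
  by (subst plus_vbalg.abs_eq, subst vbalg.abs_eq_iff)
    (auto simp: vb_equiv_def intro: veq.refl veq.sym[OF veq.add_zero])

lemma vb_class_Smul: "vb_class r t \<omega> (Smul c x) = cscale c (vb_class r t \<omega> x)"
  unfolding vb_class_def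
  by (subst cscale.abs_eq, subst vbalg.abs_eq_iff)
    (auto simp: vb_equiv_def intro: veq.refl veq.sym[OF veq_Smul_Zer])

lemma vb_class_Zer: "vb_class r t \<omega> Zer = 0"
  unfolding vb_class_def zero_vbalg_def
  by (subst vbalg.abs_eq_iff) (auto simp: vb_equiv_def intro: veq.refl)

lemmas vb_class_simps = vb_class_Comp vb_class_Add vb_class_Smul vb_class_Zer

lemma Seq_length: "A \<in> Seq r t \<Longrightarrow> length A = r + t"
  by (simp add: Seq_def)

lemma Seq_nth: "A \<in> Seq r t \<Longrightarrow> j < r + t \<Longrightarrow> A ! j = 1 \<or> A ! j = -1"
proof -
  assume A: "A \<in> Seq r t" "j < r + t"
  then have "A ! j \<in> set A" by (simp add: Seq_def)
  then show ?thesis using A(1) unfolding Seq_def by blast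
qed

lemma Seq_nth_neq:
  "A \<in> Seq r t \<Longrightarrow> a < r + t \<Longrightarrow> b < r + t \<Longrightarrow> A ! a \<noteq> A ! b \<Longrightarrow> A ! b = - A ! a"
  using Seq_nth[of A r t a] Seq_nth[of A r t b] by auto

lemma length_swp [simp]: "length (swp j A) = length A"
  by (simp add: swp_def)

lemma swp_nth:
  "1 \<le> j \<Longrightarrow> j < length A \<Longrightarrow>
   swp j A ! l = (if l = j - 1 then A ! j else if l = j then A ! (j - 1) else A ! l)"
  by (auto simp: swp_def nth_list_update)

lemma swp_nth_left [simp]: "1 \<le> j \<Longrightarrow> j < length A \<Longrightarrow> swp j A ! (j - 1) = A ! j"
  and swp_nth_right [simp]: "1 \<le> j \<Longrightarrow> j < length A \<Longrightarrow> swp j A ! j = A ! (j - 1)"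
  by (simp_all add: swp_nth)

lemma swp_swp [simp]: "1 \<le> j \<Longrightarrow> j < length A \<Longrightarrow> swp j (swp j A) = A"
  by (rule nth_equalityI) (auto simp: swp_nth)

lemma swp_id: "A ! (j - 1) = A ! j \<Longrightarrow> swp j A = A"
  unfolding swp_def by (metis list_update_id)

lemma swp_neq: "1 \<le> j \<Longrightarrow> j < length A \<Longrightarrow> A ! (j - 1) \<noteq> A ! j \<Longrightarrow> swp j A \<noteq> A"
  by (metis swp_nth)

lemma swp_Seq: "A \<in> Seq r t \<Longrightarrow> 1 \<le> j \<Longrightarrow> j < r + t \<Longrightarrow> swp j A \<in> Seq r t"
proof -
  assume A: "A \<in> Seq r t" "1 \<le> j" "j < r + t"
  have m: "mset (swp j A) = mset A"
    unfolding swp_def using A by (simp add: Seq_length mset_swap)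
  then have "set (swp j A) = set A" by (metis set_mset_mset)
  moreover have "length (filter (\<lambda>x. x = 1) (swp j A)) = length (filter (\<lambda>x. x = 1) A)"
    by (metis m mset_filter size_mset)
  ultimately show ?thesis using A by (simp add: Seq_def)
qed

lemma take_swp: "1 \<le> i \<Longrightarrow> i < length A \<Longrightarrow> take i (swp i A) = take (i - 1) A @ [A ! i]"
  by (rule nth_equalityI) (auto simp: swp_nth nth_append)

lemmas Seq_simps = Seq_length swp_nth swp_id swp_Seq

section \<open>The defining relations as ring identities\<close>

text \<open>Lemma rel<n> restates rule r<n> of \<open>monpair\<close> or rel<n> of \<open>veq\<close>; the suffix _hat marks
  the instance with hatted generators.\<close>

locale affine_walled_brauer =
  fixes r t :: nat and \<omega> :: "nat \<Rightarrow> complex"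
begin

abbreviation ev :: "tm \<Rightarrow> vbalg" where "ev \<equiv> vb_class r t \<omega>"
abbreviation "I X \<equiv> ev (Idm X)"
abbreviation "eg X i \<equiv> ev (Eg X i)"
abbreviation "sg X i \<equiv> ev (Sg X i)"
abbreviation "yg X i \<equiv> ev (Yg X i)"
abbreviation "shg X i \<equiv> ev (SHg X i)"
abbreviation "ehg X i \<equiv> ev (EHg X i)"
abbreviation "yp X i k \<equiv> ev (ypow X i k)"

abbreviation has_e :: "int list \<Rightarrow> nat \<Rightarrow> bool" where
  "has_e A i \<equiv> gen_ok r t (Eg A i)"

lemma has_e_swp:
  assumes "has_e A i"
  shows "has_e (swp i A) i" "swp i (swp i A) = A"
  using assms by (auto simp: Seq_simps)

lemma ev_eq: "veq r t \<omega> x y \<Longrightarrow> ev x = ev y"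
  by (simp add: vb_class_eq_iff)

lemma ev_bad_gen: "\<not> gen_ok r t g \<Longrightarrow> ev g = 0"
  by (subst vb_class_Zer[symmetric], rule ev_eq, erule veq.bad_gen)

lemma I_idem [simp]: "I X * I X = I X"
  by (subst vb_class_Comp[symmetric], rule ev_eq, rule veq.id_idem)

lemma I_absorb:
  assumes "g = I Y * g * I X"
  shows "I Y * g = g" "g * I X = g"
proof -
  have "I Y * g = I Y * (I Y * g * I X)" by (rule arg_cong[OF assms])
  also have "\<dots> = I Y * g * I X" by (simp add: mult.assoc[symmetric])
  also have "\<dots> = g" by (rule assms[symmetric])
  finally show "I Y * g = g" .
  have "g * I X = (I Y * g * I X) * I X" by (rule arg_cong[OF assms])
  also have "\<dots> = I Y * g * I X" by (simp add: mult.assoc)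
  also have "\<dots> = g" by (rule assms[symmetric])
  finally show "g * I X = g" .
qed

lemma source_target:
  "sg X i = I X * sg X i * I X" "eg X i = I X * eg X i * I X" "yg X i = I X * yg X i * I X"
  "shg X i = I (swp i X) * shg X i * I X" "ehg X i = I (swp i X) * ehg X i * I X"
  using ev_eq[OF veq.src_S] ev_eq[OF veq.src_E] ev_eq[OF veq.src_Y] ev_eq[OF veq.src_SH]
    ev_eq[OF veq.src_EH]
  by (simp_all add: vb_class_Comp mult.assoc)

lemmas I_left [simp] = source_target[THEN I_absorb(1)]
lemmas I_right [simp] = source_target[THEN I_absorb(2)]

lemma I_right' [simp]:
  "a * sg X i * I X = a * sg X i" "a * eg X i * I X = a * eg X i" "a * yg X i * I X = a * yg X i"
  "a * shg X i * I X = a * shg X i" "a * ehg X i * I X = a * ehg X i"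
  by (simp_all add: mult.assoc)

lemma ev_monpair:
  "monpair w1 w2 \<Longrightarrow> wmor r t w1 X Z m1 \<Longrightarrow> wmor r t w2 X Z m2 \<Longrightarrow> ev m1 = ev m2"
  by (rule ev_eq, rule veq.mon, assumption, auto simp: monrel_def)

lemma wmor1: "X \<in> Seq r t \<Longrightarrow> step (r + t) l1 X Y g1 \<Longrightarrow> wmor r t [l1] X Y (Comp g1 (Idm X))"
  by (rule wmor.wcons[OF wmor.wnil])

lemma wmor2:
  "X \<in> Seq r t \<Longrightarrow> step (r + t) l1 X Y g1 \<Longrightarrow> step (r + t) l2 Y Z g2 \<Longrightarrow>
   wmor r t [l2, l1] X Z (Comp g2 (Comp g1 (Idm X)))"
  by (rule wmor.wcons[OF wmor1])

lemma wmor3: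
  "X \<in> Seq r t \<Longrightarrow> step (r + t) l1 X Y g1 \<Longrightarrow> step (r + t) l2 Y Z g2 \<Longrightarrow>
   step (r + t) l3 Z U g3 \<Longrightarrow> wmor r t [l3, l2, l1] X U (Comp g3 (Comp g2 (Comp g1 (Idm X))))"
  by (rule wmor.wcons[OF wmor2])

lemma rel1:
  assumes "gen_ok r t (Sg A i)"
  shows "sg A i * sg A i = I A"
proof -
  have "ev (Comp (Sg A i) (Comp (Sg A i) (Idm A))) = ev (Idm A)"
    by (rule ev_monpair[OF monpair.r1 wmor2[where Y = A] wmor.wnil])
      (use assms in \<open>auto simp: Seq_simps\<close>)
  then show ?thesis by (simp add: vb_class_Comp)
qed

lemma rel1_hat:
  assumes "has_e A i"
  shows "shg (swp i A) i * shg A i = I A"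
proof -
  have "ev (Comp (SHg (swp i A) i) (Comp (SHg A i) (Idm A))) = ev (Idm A)"
    by (rule ev_monpair[OF monpair.r1 wmor2[where Y = "swp i A"] wmor.wnil])
      (use assms in \<open>auto simp: Seq_simps\<close>)
  then show ?thesis by (simp add: vb_class_Comp)
qed

lemma rel2c:
  assumes "gen_ok r t (Sg A i)" "1 \<le> j" "j \<le> r + t" "j \<noteq> i" "j \<noteq> i + 1"
  shows "sg A i * yg A j = yg A j * sg A i"
proof -
  have "ev (Comp (Sg A i) (Comp (Yg A j) (Idm A))) = ev (Comp (Yg A j) (Comp (Sg A i) (Idm A)))"
    by (rule ev_monpair[OF monpair.r2c[of j i] wmor2[where Y = A] wmor2[where Y = A]])
      (use assms in \<open>auto simp: Seq_simps\<close>)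
  then show ?thesis by (simp add: vb_class_Comp)
qed

lemma rel2c_hat:
  assumes "has_e A i" "1 \<le> j" "j \<le> r + t" "j \<noteq> i" "j \<noteq> i + 1"
  shows "shg A i * yg A j = yg (swp i A) j * shg A i"
proof -
  have "ev (Comp (SHg A i) (Comp (Yg A j) (Idm A)))
      = ev (Comp (Yg (swp i A) j) (Comp (SHg A i) (Idm A)))"
    by (rule ev_monpair[OF monpair.r2c[of j i] wmor2[where Y = A] wmor2[where Y = "swp i A"]])
      (use assms in \<open>auto simp: Seq_simps\<close>)
  then show ?thesis by (simp add: vb_class_Comp)
qed

lemma rel4:
  assumes "A \<in> Seq r t" "2 \<le> r + t" "A ! 0 = 1" "A ! 1 = -1"
  shows "eg A 1 * yp A 1 k * eg A 1 = cscale (\<omega> k) (eg A 1)"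
  using ev_eq[OF veq.rel4[OF assms]] by (simp add: vb_class_simps mult.assoc)

lemma rel5c:
  assumes "has_e A i" "1 \<le> j" "j \<le> r + t" "j \<noteq> i" "j \<noteq> i + 1"
  shows "eg A i * yg A j = yg A j * eg A i"
proof -
  have "ev (Comp (Eg A i) (Comp (Yg A j) (Idm A))) = ev (Comp (Yg A j) (Comp (Eg A i) (Idm A)))"
    by (rule ev_monpair[OF monpair.r5c[of j i] wmor2[where Y = A] wmor2[where Y = A]])
      (use assms in auto)
  then show ?thesis by (simp add: vb_class_Comp)
qed

lemma rel5d:
  assumes "A \<in> Seq r t"
  shows "yg A i * yg A j = yg A j * yg A i"
proof (cases "1 \<le> i \<and> i \<le> r + t \<and> 1 \<le> j \<and> j \<le> r + t")
  case True
  have "ev (Comp (Yg A i) (Comp (Yg A j) (Idm A))) = ev (Comp (Yg A j) (Comp (Yg A i) (Idm A)))"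
    by (rule ev_monpair[OF monpair.r5d[of i j] wmor2[where Y = A] wmor2[where Y = A]])
      (use assms True in auto)
  then show ?thesis by (simp add: vb_class_Comp)
next
  case False
  then have "yg A i = 0 \<or> yg A j = 0" by (auto intro!: ev_bad_gen)
  then show ?thesis by auto
qed

lemma rel6a:
  assumes "has_e A i"
  shows "shg A i * eg A i = ehg A i"
proof -
  have "ev (Comp (SHg A i) (Comp (Eg A i) (Idm A))) = ev (Comp (EHg A i) (Idm A))"
    by (rule ev_monpair[OF monpair.r6a wmor2[where Y = A] wmor1])
      (use assms in \<open>auto simp: Seq_simps\<close>)
  then show ?thesis by (simp add: vb_class_Comp)
qed

lemma rel6a_hat:
  assumes "has_e A i"
  shows "shg (swp i A) i * ehg A i = eg A i"
proof -
  have "ev (Comp (SHg (swp i A) i) (Comp (EHg A i) (Idm A))) = ev (Comp (Eg A i) (Idm A))"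
    by (rule ev_monpair[OF monpair.r6a wmor2[where Y = "swp i A"] wmor1])
      (use assms in \<open>auto simp: Seq_simps\<close>)
  then show ?thesis by (simp add: vb_class_Comp)
qed

lemma rel6b:
  assumes "has_e A i"
  shows "eg (swp i A) i * shg A i = ehg A i"
proof -
  have "ev (Comp (EHg A i) (Idm A)) = ev (Comp (Eg (swp i A) i) (Comp (SHg A i) (Idm A)))"
    by (rule ev_monpair[OF monpair.r6b wmor1 wmor2[where Y = "swp i A"]])
      (use assms in \<open>auto simp: Seq_simps\<close>)
  then show ?thesis by (simp add: vb_class_Comp)
qed

lemma rel6b_hat:
  assumes "has_e A i"
  shows "ehg (swp i A) i * shg A i = eg A i"
proof -
  have "ev (Comp (Eg A i) (Idm A)) = ev (Comp (EHg (swp i A) i) (Comp (SHg A i) (Idm A)))"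
    by (rule ev_monpair[OF monpair.r6b wmor1 wmor2[where Y = "swp i A"]])
      (use assms in \<open>auto simp: Seq_simps\<close>)
  then show ?thesis by (simp add: vb_class_Comp)
qed

lemma alternating_nth:
  assumes "has_e A j" "has_e A (Suc j)"
  shows "A ! (j - 1) = A ! Suc j"
  using Seq_nth[of A r t "j - 1"] Seq_nth[of A r t j] Seq_nth[of A r t "Suc j"] assms by auto

lemma rel6c:
  assumes "has_e A j" "has_e A (Suc j)"
  shows "sg (swp (Suc j) A) j * ehg A (Suc j) * eg A j = shg A (Suc j) * eg A j"
proof -
  have "ev (Comp (Sg (swp (Suc j) A) j) (Comp (EHg A (Suc j)) (Comp (Eg A j) (Idm A))))
      = ev (Comp (SHg A (Suc j)) (Comp (Eg A j) (Idm A)))"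
    by (rule ev_monpair[OF monpair.r6c[of j, simplified]
          wmor3[where Y = A and Z = "swp (Suc j) A"] wmor2[where Y = A]])
      (use assms alternating_nth[OF assms] in \<open>auto simp: Seq_simps\<close>)
  then show ?thesis by (simp add: vb_class_Comp mult.assoc)
qed

lemma rel6d:
  assumes "has_e A j" "has_e A (Suc j)"
  shows "eg A j * ehg (swp (Suc j) A) (Suc j) * sg (swp (Suc j) A) j
    = eg A j * shg (swp (Suc j) A) (Suc j)"
proof -
  let ?B = "swp (Suc j) A"
  have "ev (Comp (Eg A j) (Comp (EHg ?B (Suc j)) (Comp (Sg ?B j) (Idm ?B))))
      = ev (Comp (Eg A j) (Comp (SHg ?B (Suc j)) (Idm ?B)))"
    by (rule ev_monpair[OF monpair.r6d[of j, simplified]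
          wmor3[where Y = ?B and Z = A] wmor2[where Y = A]])
      (use assms alternating_nth[OF assms] in \<open>auto simp: Seq_simps\<close>)
  then show ?thesis by (simp add: vb_class_Comp mult.assoc)
qed

lemma rel6g:
  assumes "has_e A j" "has_e A (Suc j)"
  shows "eg A (Suc j) * eg A j * eg A (Suc j) = eg A (Suc j)"
proof -
  have "ev (Comp (Eg A (Suc j)) (Comp (Eg A j) (Comp (Eg A (Suc j)) (Idm A))))
      = ev (Comp (Eg A (Suc j)) (Idm A))"
    by (rule ev_monpair[OF monpair.r6g[of j, simplified] wmor3[where Y = A and Z = A] wmor1])
      (use assms in auto)
  then show ?thesis by (simp add: vb_class_Comp mult.assoc)
qed

lemma rel7c:
  assumes "has_e A i"
  shows "shg A i * yg A i = yg (swp i A) (Suc i) * shg A i + ehg A i"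
proof -
  have "gen_ok r t (SHg A i)" using assms swp_neq[of i A] by (auto simp: Seq_simps)
  from ev_eq[OF veq.rel7c[OF this]] show ?thesis by (simp add: vb_class_simps algebra_simps)
qed

lemma rel7d:
  assumes "has_e A i"
  shows "shg A i * yg A (Suc i) = yg (swp i A) i * shg A i - ehg A i"
proof -
  have "gen_ok r t (SHg A i)" using assms swp_neq[of i A] by (auto simp: Seq_simps)
  from ev_eq[OF veq.rel7d[OF this]] show ?thesis by (simp add: vb_class_simps algebra_simps)
qed

lemma rel8a:
  assumes "has_e A i"
  shows "eg A i * yg A (Suc i) = - (eg A i * yg A i)"
  using ev_eq[OF veq.rel8a[OF assms]] by (simp add: vb_class_simps algebra_simps add_eq_0_iff)

lemma rel8b:
  assumes "has_e A i"
  shows "yg A (Suc i) * eg A i = - (yg A i * eg A i)"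
  using ev_eq[OF veq.rel8b[OF assms]] by (simp add: vb_class_simps algebra_simps add_eq_0_iff)

end

section \<open>Powers of the y_j and polynomials in them\<close>

fun exp_add :: "nat list \<Rightarrow> nat list \<Rightarrow> nat list" where
  "exp_add [] ys = ys"
| "exp_add xs [] = xs"
| "exp_add (x # xs) (y # ys) = (x + y) # exp_add xs ys"

definition poly_mult ::
  "(complex \<times> nat list) list \<Rightarrow> (complex \<times> nat list) list \<Rightarrow> (complex \<times> nat list) list" where
  "poly_mult P Q = concat (map (\<lambda>(c, e). map (\<lambda>(d, e'). (c * d, exp_add e e')) Q) P)"

definition poly_scale :: "complex \<Rightarrow> (complex \<times> nat list) list \<Rightarrow> (complex \<times> nat list) list" where
  "poly_scale c P = map (\<lambda>(d, e). (c * d, e)) P"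

definition y_power :: "nat \<Rightarrow> nat \<Rightarrow> (complex \<times> nat list) list" where
  "y_power j m = [(1, replicate (j - 1) 0 @ [m])]"

definition const_poly :: "complex \<Rightarrow> (complex \<times> nat list) list" where
  "const_poly c = [(c, [])]"

definition vars_below :: "nat \<Rightarrow> (complex \<times> nat list) list \<Rightarrow> bool" where
  "vars_below i P \<longleftrightarrow> (\<forall>(c, e) \<in> set P. length e < i)"

lemma length_exp_add [simp]: "length (exp_add xs ys) = max (length xs) (length ys)"
  by (induction xs ys rule: exp_add.induct) auto

lemma vars_below_Nil [simp]: "vars_below i []"
  and vars_below_append [simp]: "vars_below i (P @ Q) \<longleftrightarrow> vars_below i P \<and> vars_below i Q"
  and vars_below_poly_scale [simp]: "vars_below i (poly_scale c P) \<longleftrightarrow> vars_below i P"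
  by (auto simp: vars_below_def poly_scale_def)

lemma vars_below_poly_mult: "vars_below i P \<Longrightarrow> vars_below i Q \<Longrightarrow> vars_below i (poly_mult P Q)"
  by (fastforce simp: vars_below_def poly_mult_def)

lemma vars_below_mono: "vars_below i P \<Longrightarrow> i \<le> j \<Longrightarrow> vars_below j P"
  by (fastforce simp: vars_below_def)

lemma vars_below_y_power: "1 \<le> j \<Longrightarrow> j < i \<Longrightarrow> vars_below i (y_power j m)"
  by (simp add: vars_below_def y_power_def)

lemma vars_below_const_poly: "1 \<le> i \<Longrightarrow> vars_below i (const_poly c)"
  by (simp add: vars_below_def const_poly_def)

context affine_walled_brauer
begin

abbreviation "pv X P \<equiv> ev (peval X P)"
abbreviation "mt X j es \<equiv> ev (monoterm X j es)"

lemma yp_Suc [simp]: "yp X i (Suc k) = yg X i * yp X i k"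
  by (simp add: vb_class_Comp)

declare ypow.simps(2) [simp del]

lemma I_yp [simp]: "I X * yp X i k = yp X i k" "I X * (yp X i k * a) = yp X i k * a"
  by (induction k) (simp_all add: mult.assoc[symmetric])

lemma yp_I [simp]: "yp X i k * I X = yp X i k" "a * yp X i k * I X = a * yp X i k"
  by (induction k) (simp_all add: mult.assoc)

lemma yp_add: "yp X i (a + b) = yp X i a * yp X i b"
  by (induction a) (simp_all add: mult.assoc)

lemma yp_Suc': "yp X i (Suc k) = yp X i k * yg X i"
  using yp_add[of X i k 1] by simp

lemma mult_yp_commute:
  assumes "a * yg X j = yg Y j' * a" "I Y * a = a" "a * I X = a"
  shows "a * yp X j k = yp Y j' k * a"
proof (induction k)
  case 0
  then show ?case using assms by simp
next
  case (Suc k)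
  have "a * yp X j (Suc k) = (a * yg X j) * yp X j k" by (simp add: mult.assoc)
  also have "\<dots> = yg Y j' * (a * yp X j k)" by (simp add: assms mult.assoc)
  also have "\<dots> = yp Y j' (Suc k) * a" by (simp add: Suc mult.assoc)
  finally show ?case .
qed

lemma yg_yp_commute: "X \<in> Seq r t \<Longrightarrow> yg X i * yp X j k = yp X j k * yg X i"
  by (rule mult_yp_commute) (simp_all add: rel5d)

lemma mult_yp_sign:
  assumes "a * yg X j = - (a * yg X l)" "X \<in> Seq r t"
  shows "a * yp X j k = cscale ((-1) ^ k) (a * yp X l k)"
proof (induction k)
  case 0
  then show ?case by simp
next
  case (Suc k)
  have "a * yp X j (Suc k) = (a * yp X j k) * yg X j" by (simp only: yp_Suc' mult.assoc)
  also have "\<dots> = cscale ((-1) ^ k) (a * (yp X l k * yg X j))"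
    by (simp add: Suc cscale_mult_left mult.assoc)
  also have "\<dots> = cscale ((-1) ^ k) (a * yg X j * yp X l k)"
    by (simp add: yg_yp_commute[OF assms(2)] mult.assoc)
  also have "\<dots> = cscale ((-1) ^ Suc k) (a * yp X l (Suc k))"
    by (simp add: assms(1) mult.assoc cscale_mult_left)
  finally show ?case .
qed

lemma eg_yp_commute:
  assumes "has_e X i" "1 \<le> l" "l \<le> r + t" "l \<noteq> i" "l \<noteq> i + 1"
  shows "eg X i * yp X l k = yp X l k * eg X i"
  by (rule mult_yp_commute) (use assms in \<open>auto intro!: rel5c\<close>)

lemma mt_Nil [simp]: "mt X j [] = I X"
  by simp

lemma mt_Cons [simp]: "mt X j (k # ks) = yp X j k * mt X (Suc j) ks"
  by (simp add: vb_class_Comp)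

declare monoterm.simps [simp del]

lemma I_mt [simp]: "I X * mt X j es = mt X j es"
  by (induction es arbitrary: j) (simp_all add: mult.assoc[symmetric])

lemma mt_I [simp]: "mt X j es * I X = mt X j es"
  by (induction es arbitrary: j) (simp_all add: mult.assoc)

lemma mt_yp_commute:
  assumes "X \<in> Seq r t"
  shows "mt X j es * yp X l k = yp X l k * mt X j es"
proof (rule mult_yp_commute)
  show "mt X j es * yg X l = yg X l * mt X j es"
  proof (induction es arbitrary: j)
    case (Cons k ks)
    have "mt X j (k # ks) * yg X l = yp X j k * (mt X (Suc j) ks * yg X l)"
      by (simp add: mult.assoc)
    also have "\<dots> = yg X l * mt X j (k # ks)"
      by (simp add: Cons yg_yp_commute[OF assms] mult.assoc[symmetric])
    finally show ?case .
  qed simp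
qed simp_all

lemma mt_mult:
  assumes "X \<in> Seq r t"
  shows "mt X j e1 * mt X j e2 = mt X j (exp_add e1 e2)"
proof (induction e1 e2 arbitrary: j rule: exp_add.induct)
  case (3 x xs y ys)
  have "mt X j (x # xs) * mt X j (y # ys) = yp X j x * (mt X (Suc j) xs * yp X j y) * mt X (Suc j) ys"
    by (simp add: mult.assoc)
  also have "\<dots> = (yp X j x * yp X j y) * (mt X (Suc j) xs * mt X (Suc j) ys)"
    by (simp add: mt_yp_commute[OF assms] mult.assoc)
  also have "\<dots> = mt X j (exp_add (x # xs) (y # ys))" by (simp add: 3 yp_add)
  finally show ?case .
qed (simp_all add: mult.assoc)

lemma pv_Nil [simp]: "pv X [] = 0"
  by (simp add: vb_class_Zer)

lemma pv_Cons [simp]: "pv X ((c, e) # P) = cscale c (mt X 1 e) + pv X P"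
  by (simp add: vb_class_simps)

declare peval.simps [simp del]

lemma pv_append [simp]: "pv X (P @ Q) = pv X P + pv X Q"
  by (induction P) (auto simp: add.assoc)

lemma pv_poly_scale: "pv X (poly_scale c P) = cscale c (pv X P)"
  by (induction P) (auto simp: poly_scale_def cscale.scale_right_distrib)

lemma pv_poly_mult:
  assumes "X \<in> Seq r t"
  shows "pv X (poly_mult P Q) = pv X P * pv X Q"
proof (induction P)
  case Nil
  then show ?case by (simp add: poly_mult_def)
next
  case (Cons p P)
  obtain c e where p: "p = (c, e)" by (cases p)
  have "pv X (map (\<lambda>(d, e'). (c * d, exp_add e e')) Q) = cscale c (mt X 1 e) * pv X Q"
    by (induction Q) (auto simp: distrib_left cscale_mult_left cscale_mult_right mt_mult[OF assms]
        cscale.scale_right_distrib)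
  moreover have "poly_mult (p # P) Q = map (\<lambda>(d, e'). (c * d, exp_add e e')) Q @ poly_mult P Q"
    by (simp add: poly_mult_def p)
  ultimately show ?case by (simp add: Cons p distrib_right)
qed

lemma pv_y_power:
  assumes "1 \<le> j"
  shows "pv X (y_power j m) = yp X j m"
proof -
  have "mt X l (replicate c 0 @ [m]) = yp X (l + c) m" for l c
    by (induction c arbitrary: l) simp_all
  then show ?thesis using assms by (simp add: y_power_def)
qed

lemma pv_const_poly: "pv X (const_poly c) = cscale c (I X)"
  by (simp add: const_poly_def)

lemma mult_pv_commute:
  assumes y: "\<And>l. 1 \<le> l \<Longrightarrow> l < i \<Longrightarrow> g * yg X l = yg X' l * g"
    and I: "I X' * g = g" "g * I X = g"
    and P: "vars_below i P"
  shows "g * pv X P = pv X' P * g"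
proof -
  have mt: "g * mt X j es = mt X' j es * g" if "1 \<le> j" "j + length es \<le> i" for j es
    using that
  proof (induction es arbitrary: j)
    case (Cons k ks)
    have "g * mt X j (k # ks) = (g * yp X j k) * mt X (Suc j) ks" by (simp add: mult.assoc)
    also have "\<dots> = yp X' j k * (g * mt X (Suc j) ks)"
      using Cons.prems by (simp add: mult_yp_commute[OF y I] mult.assoc)
    also have "\<dots> = mt X' j (k # ks) * g" using Cons by (simp add: mult.assoc)
    finally show ?case .
  qed (simp add: I)
  show ?thesis
    using P
  proof (induction P)
    case (Cons p P)
    obtain c e where p: "p = (c, e)" by (cases p)
    have "g * mt X 1 e = mt X' 1 e * g"
      by (rule mt) (use Cons.prems p in \<open>auto simp: vars_below_def\<close>)
    then show ?case using Cons
      by (simp add: p distrib_left distrib_right cscale_mult_left cscale_mult_right vars_below_def)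
  qed simp
qed

lemma eg_pv_commute: "has_e X i \<Longrightarrow> vars_below i P \<Longrightarrow> eg X i * pv X P = pv X P * eg X i"
  by (rule mult_pv_commute) (auto intro!: rel5c)

lemma shg_pv_commute:
  "has_e X i \<Longrightarrow> vars_below i P \<Longrightarrow> shg X i * pv X P = pv (swp i X) P * shg X i"
  by (rule mult_pv_commute) (auto intro!: rel2c_hat)

end

section \<open>Uniform polynomial multiples of e_i\<close>

context affine_walled_brauer
begin

definition e_seqs :: "nat \<Rightarrow> int list \<Rightarrow> int list set" where
  "e_seqs i p = {A. has_e A i \<and> take i A = p}"

definition poly_multiple :: "nat \<Rightarrow> int list \<Rightarrow> (int list \<Rightarrow> vbalg) \<Rightarrow> bool" where
  "poly_multiple i p F \<longleftrightarrow> (\<exists>P. vars_below i P \<and> (\<forall>A \<in> e_seqs i p. F A = pv A P * eg A i))"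

abbreviation bubble :: "nat \<Rightarrow> nat \<Rightarrow> int list \<Rightarrow> vbalg" where
  "bubble i k A \<equiv> eg A i * yp A i k * eg A i"

lemma mem_e_seqs: "A \<in> e_seqs i p \<longleftrightarrow> has_e A i \<and> take i A = p"
  by (simp add: e_seqs_def)

lemma poly_multipleI:
  "vars_below i P \<Longrightarrow> (\<And>A. A \<in> e_seqs i p \<Longrightarrow> F A = pv A P * eg A i) \<Longrightarrow> poly_multiple i p F"
  unfolding poly_multiple_def by blast

lemma poly_multiple_cong:
  "poly_multiple i p F \<Longrightarrow> (\<And>A. A \<in> e_seqs i p \<Longrightarrow> G A = F A) \<Longrightarrow> poly_multiple i p G"
  unfolding poly_multiple_def by auto

lemma poly_multiple_empty: "e_seqs i p = {} \<Longrightarrow> poly_multiple i p F"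
  by (rule poly_multipleI[of _ "[]"]) simp_all

lemma poly_multiple_add:
  assumes "poly_multiple i p F" "poly_multiple i p G"
  shows "poly_multiple i p (\<lambda>A. F A + G A)"
proof -
  obtain P where "vars_below i P" "\<And>A. A \<in> e_seqs i p \<Longrightarrow> F A = pv A P * eg A i"
    using assms(1) unfolding poly_multiple_def by blast
  moreover obtain Q where "vars_below i Q" "\<And>A. A \<in> e_seqs i p \<Longrightarrow> G A = pv A Q * eg A i"
    using assms(2) unfolding poly_multiple_def by blast
  ultimately show ?thesis by (intro poly_multipleI[of _ "P @ Q"]) (simp_all add: distrib_right)
qed

lemma poly_multiple_scale:
  assumes "poly_multiple i p F"
  shows "poly_multiple i p (\<lambda>A. cscale c (F A))"
proof -
  obtain P where "vars_below i P" "\<And>A. A \<in> e_seqs i p \<Longrightarrow> F A = pv A P * eg A i"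
    using assms unfolding poly_multiple_def by blast
  then show ?thesis
    by (intro poly_multipleI[of _ "poly_scale c P"]) (simp_all add: pv_poly_scale cscale_mult_left)
qed

lemma poly_multiple_uminus: "poly_multiple i p F \<Longrightarrow> poly_multiple i p (\<lambda>A. - F A)"
  using poly_multiple_scale[of i p F "-1"] by simp

lemma poly_multiple_diff:
  "poly_multiple i p F \<Longrightarrow> poly_multiple i p G \<Longrightarrow> poly_multiple i p (\<lambda>A. F A - G A)"
  using poly_multiple_add[OF _ poly_multiple_uminus] by simp

lemma poly_multiple_pv_mult:
  assumes "vars_below i Q" "poly_multiple i p F"
  shows "poly_multiple i p (\<lambda>A. pv A Q * F A)"
proof -
  obtain P where "vars_below i P" "\<And>A. A \<in> e_seqs i p \<Longrightarrow> F A = pv A P * eg A i"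
    using assms(2) unfolding poly_multiple_def by blast
  with assms(1) show ?thesis
    by (intro poly_multipleI[of _ "poly_mult Q P"])
      (simp_all add: vars_below_poly_mult pv_poly_mult mem_e_seqs mult.assoc)
qed

section \<open>Conjugation by hat-s_i\<close>

lemma conj_yp:
  assumes "g' * g = I X" "g * I X = g"
  shows "g * yp X i k * g' = ((*) (g * yg X i * g') ^^ k) (g * g')"
proof (induction k)
  case 0
  then show ?case by (simp add: assms(2))
next
  case (Suc k)
  have "g * yp X i (Suc k) * g' = g * yg X i * (g' * g) * yp X i k * g'"
    by (simp add: assms(1) mult.assoc)
  also have "\<dots> = (g * yg X i * g') * (g * yp X i k * g')"
    by (simp add: mult.assoc)
  finally show ?case by (simp add: Suc)
qed

abbreviation pow_on :: "int list \<Rightarrow> vbalg \<Rightarrow> nat \<Rightarrow> vbalg" where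
  "pow_on X a n \<equiv> ((*) a ^^ n) (I X)"

lemma eg_conj_shg:
  assumes "has_e X i"
  shows "shg X i * eg X i * shg (swp i X) i = eg (swp i X) i"
  using rel6a[OF assms] rel6b_hat[OF has_e_swp(1)[OF assms]] by (simp add: has_e_swp(2)[OF assms])

lemma yg_conj_shg:
  assumes "has_e X i"
  shows "shg X i * yg X i * shg (swp i X) i = yg (swp i X) (Suc i) + eg (swp i X) i"
proof -
  note C = has_e_swp[OF assms]
  have "shg X i * shg (swp i X) i = I (swp i X)"
    using rel1_hat[OF C(1)] by (simp add: C(2))
  moreover have "ehg X i * shg (swp i X) i = eg (swp i X) i"
    using rel6b_hat[OF C(1)] by (simp add: C(2))
  ultimately show ?thesis
    by (simp add: rel7c[OF assms] distrib_right mult.assoc)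
qed

lemma eg_yp_Suc_sign:
  assumes "has_e C i"
  shows "eg C i * yp C (Suc i) m = cscale ((-1) ^ m) (eg C i * yp C i m)"
  by (rule mult_yp_sign) (use rel8a[OF assms] assms in auto)

text \<open>With L = y_(i+1) + e_i one has
    e_i y_(i+1)^m L^(n+1) e_i = e_i y_(i+1)^(m+1) L^n e_i + (e_i y_(i+1)^m e_i) L^n e_i
  and e_i y_(i+1)^m e_i = (-1)^m e_i y_i^m e_i.\<close>

lemma poly_multiple_shifted_power:
  assumes bubbles: "\<And>k. poly_multiple i p (bubble i k)"
  shows "poly_multiple i p
    (\<lambda>C. eg C i * yp C (Suc i) m * pow_on C (yg C (Suc i) + eg C i) n * eg C i)"
proof (induction n arbitrary: m)
  case 0
  show ?case
  proof (rule poly_multiple_cong[OF poly_multiple_scale[OF bubbles[of m]]])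
    fix C assume "C \<in> e_seqs i p"
    then show "eg C i * yp C (Suc i) m * pow_on C (yg C (Suc i) + eg C i) 0 * eg C i
      = cscale ((-1) ^ m) (bubble i m C)"
      by (simp add: eg_yp_Suc_sign mem_e_seqs cscale_mult_left)
  qed
next
  case (Suc n)
  obtain B where B: "vars_below i B" "\<And>C. C \<in> e_seqs i p \<Longrightarrow> bubble i m C = pv C B * eg C i"
    using bubbles[of m] unfolding poly_multiple_def by blast
  show ?case
  proof (rule poly_multiple_cong[OF poly_multiple_add[OF Suc[of "Suc m"]
          poly_multiple_scale[OF poly_multiple_pv_mult[OF B(1) Suc[of 0]]]]])
    fix C assume C: "C \<in> e_seqs i p"
    let ?L = "pow_on C (yg C (Suc i) + eg C i) n"
    have bubble_m: "eg C i * yp C (Suc i) m * eg C i = cscale ((-1) ^ m) (pv C B * eg C i)"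
      using C by (simp add: eg_yp_Suc_sign mem_e_seqs cscale_mult_left B(2))
    have "eg C i * yp C (Suc i) m * pow_on C (yg C (Suc i) + eg C i) (Suc n) * eg C i
      = eg C i * (yp C (Suc i) m * yg C (Suc i)) * ?L * eg C i
        + (eg C i * yp C (Suc i) m * eg C i) * ?L * eg C i"
      by (simp add: distrib_left distrib_right mult.assoc)
    also have "\<dots> = eg C i * yp C (Suc i) (Suc m) * ?L * eg C i
        + cscale ((-1) ^ m) (pv C B * (eg C i * yp C (Suc i) 0 * ?L * eg C i))"
      by (simp only: yp_Suc'[symmetric] bubble_m) (simp add: cscale_mult_left mult.assoc)
    finally show "eg C i * yp C (Suc i) m * pow_on C (yg C (Suc i) + eg C i) (Suc n) * eg C i
      = eg C i * yp C (Suc i) (Suc m) * ?L * eg C i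
        + cscale ((-1) ^ m) (pv C B * (eg C i * yp C (Suc i) 0 * ?L * eg C i))" .
  qed
qed

lemma poly_multiple_bubble_swp:
  assumes swp: "\<And>A. A \<in> e_seqs i p \<Longrightarrow> swp i A \<in> e_seqs i p'"
    and target: "\<And>k. poly_multiple i p' (bubble i k)"
  shows "poly_multiple i p (bubble i k)"
proof -
  obtain P where P: "vars_below i P" "\<And>C. C \<in> e_seqs i p' \<Longrightarrow>
      eg C i * yp C (Suc i) 0 * pow_on C (yg C (Suc i) + eg C i) k * eg C i = pv C P * eg C i"
    using poly_multiple_shifted_power[OF target, of 0 k] unfolding poly_multiple_def by blast
  show ?thesis
  proof (rule poly_multipleI[OF P(1)])
    fix A assume A: "A \<in> e_seqs i p"
    define C where "C = swp i A"
    have C: "C \<in> e_seqs i p'" "has_e C i" "swp i C = A"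
      using swp[OF A] A has_e_swp(2) by (auto simp: C_def mem_e_seqs)
    have e: "eg A i = shg C i * eg C i * shg A i"
      using eg_conj_shg[OF C(2)] by (simp add: C(3))
    have A_e: "has_e A i" using A by (simp add: mem_e_seqs)
    have "shg A i * yp A i k * shg C i
      = ((*) (shg A i * yg A i * shg C i) ^^ k) (shg A i * shg C i)"
      by (rule conj_yp) (simp_all add: rel1_hat[OF A_e] C_def)
    also have "\<dots> = pow_on C (yg C (Suc i) + eg C i) k"
      using yg_conj_shg[OF A_e] rel1_hat[OF C(2)] by (simp add: C_def has_e_swp(2)[OF A_e])
    finally have conj: "shg A i * yp A i k * shg C i = pow_on C (yg C (Suc i) + eg C i) k" .
    have "eg A i * yp A i k * eg A i
      = shg C i * (eg C i * (shg A i * yp A i k * shg C i) * eg C i) * shg A i"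
      by (simp add: e mult.assoc)
    also have "\<dots> = shg C i * (pv C P * eg C i) * shg A i"
      using P(2)[OF C(1)] by (simp add: conj)
    also have "\<dots> = pv A P * eg A i"
      using shg_pv_commute[OF C(2) P(1)] by (simp add: C(3) e mult.assoc[symmetric])
    finally show "eg A i * yp A i k * eg A i = pv A P * eg A i" .
  qed
qed

end

section \<open>Two adjacent caps\<close>

context affine_walled_brauer
begin

definition twist :: "int list \<Rightarrow> nat \<Rightarrow> vbalg" where
  "twist A j = shg (swp (Suc j) A) (Suc j) * sg (swp (Suc j) A) j * shg A (Suc j)"

definition twisted_y :: "int list \<Rightarrow> nat \<Rightarrow> vbalg" where
  "twisted_y A j = yg A (Suc j) - eg A (Suc j) + eg A j"

definition lower_bubble :: "nat \<Rightarrow> nat \<Rightarrow> nat \<Rightarrow> int list \<Rightarrow> vbalg" where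
  "lower_bubble j m n A =
    eg A (Suc j) * eg A j * yp A j m * pow_on A (twisted_y A j) n * eg A j * eg A (Suc j)"

definition mixed_bubble :: "nat \<Rightarrow> nat \<Rightarrow> nat \<Rightarrow> int list \<Rightarrow> vbalg" where
  "mixed_bubble j m n A =
    eg A (Suc j) * yp A (Suc j) m * pow_on A (twisted_y A j) n * eg A j * eg A (Suc j)"

context
  fixes A :: "int list" and j :: nat
  assumes e_j: "has_e A j" and e_Suc: "has_e A (Suc j)"
begin

abbreviation (input) "B \<equiv> swp (Suc j) A"

lemma swapped_facts: "has_e B (Suc j)" "swp (Suc j) B = A" "gen_ok r t (Sg B j)"
  using e_j e_Suc alternating_nth[OF e_j e_Suc] by (auto simp: Seq_simps)

lemma I_shg_swapped [simp]:
  "I A * shg B (Suc j) = shg B (Suc j)" "I A * (shg B (Suc j) * a) = shg B (Suc j) * a"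
  using I_left(4)[where X = B and i = "Suc j"] by (simp_all add: swapped_facts(2) mult.assoc[symmetric])

lemma twist_twist: "twist A j * twist A j = I A"
proof -
  have "twist A j * twist A j
    = shg B (Suc j) * sg B j * (shg A (Suc j) * shg B (Suc j)) * sg B j * shg A (Suc j)"
    by (simp add: twist_def mult.assoc)
  also have "\<dots> = shg B (Suc j) * (sg B j * sg B j) * shg A (Suc j)"
    using rel1_hat[OF swapped_facts(1)] by (simp add: swapped_facts(2) mult.assoc)
  also have "\<dots> = I A"
    using rel1[OF swapped_facts(3)] rel1_hat[OF e_Suc] by simp
  finally show ?thesis .
qed

lemma I_twist [simp]: "I A * twist A j = twist A j" "twist A j * I A = twist A j"
  by (simp_all add: twist_def mult.assoc)

text \<open>For T = twist A j, relations (6) give T e_(j+1) e_j = e_j and e_j e_(j+1) T = e_j;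
  as T^2 = 1, this is:\<close>

lemma eg_Suc_eg: "eg A (Suc j) * eg A j = twist A j * eg A j"
proof -
  have "twist A j * (eg A (Suc j) * eg A j)
    = shg B (Suc j) * (sg B j * (shg A (Suc j) * eg A (Suc j)) * eg A j)"
    by (simp add: twist_def mult.assoc)
  also have "\<dots> = eg A j"
    using rel6a[OF e_Suc] rel6c[OF e_j e_Suc] rel1_hat[OF e_Suc] by (simp add: mult.assoc[symmetric])
  finally have "twist A j * (twist A j * (eg A (Suc j) * eg A j)) = twist A j * eg A j" by simp
  then show ?thesis by (simp add: mult.assoc[symmetric] twist_twist)
qed

lemma eg_eg_Suc: "eg A j * eg A (Suc j) = eg A j * twist A j"
proof -
  have "eg A j * eg A (Suc j) * twist A j
    = eg A j * (eg A (Suc j) * shg B (Suc j)) * sg B j * shg A (Suc j)"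
    by (simp add: twist_def mult.assoc)
  also have "\<dots> = eg A j * ehg B (Suc j) * sg B j * shg A (Suc j)"
    using rel6b[OF swapped_facts(1)] by (simp add: swapped_facts(2))
  also have "\<dots> = eg A j * shg B (Suc j) * shg A (Suc j)"
    using rel6d[OF e_j e_Suc] by simp
  also have "\<dots> = eg A j"
    using rel1_hat[OF e_Suc] by (simp add: mult.assoc)
  finally have "eg A j * eg A (Suc j) * twist A j * twist A j = eg A j * twist A j" by simp
  then show ?thesis by (simp add: mult.assoc twist_twist)
qed

lemma twist_eg_twist: "twist A j * eg A j * twist A j = eg A (Suc j)"
  using rel6g[OF e_j e_Suc] by (simp add: eg_Suc_eg[symmetric] eg_eg_Suc[symmetric] mult.assoc)

lemma twist_eg_Suc_twist: "twist A j * eg A (Suc j) * twist A j = eg A j"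
proof -
  have "twist A j * eg A (Suc j) * twist A j
    = (twist A j * twist A j) * eg A j * (twist A j * twist A j)"
    by (simp only: twist_eg_twist[symmetric] mult.assoc)
  then show ?thesis by (simp add: twist_twist)
qed

lemma twist_yg_twist: "twist A j * yg A (Suc j) * twist A j = twisted_y A j"
proof -
  have sBs: "sg B j * yg B (Suc (Suc j)) * sg B j = yg B (Suc (Suc j))"
    using rel2c[OF swapped_facts(3), of "Suc (Suc j)"] rel1[OF swapped_facts(3)] e_Suc
    by (simp add: mult.assoc)
  have sBA: "shg B (Suc j) * yg B (Suc (Suc j)) * shg A (Suc j) = yg A (Suc j) - eg A (Suc j)"
    using rel7d[OF swapped_facts(1)] rel1_hat[OF e_Suc] rel6b_hat[OF e_Suc]
    by (simp add: swapped_facts(2) left_diff_distrib mult.assoc)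
  have eBe: "shg B (Suc j) * sg B j * eg B (Suc j) * sg B j * shg A (Suc j) = eg A j"
    by (simp add: eg_conj_shg[OF e_Suc, symmetric] twist_eg_Suc_twist[symmetric] twist_def
        mult.assoc)
  have "twist A j * yg A (Suc j) * twist A j
    = shg B (Suc j) * sg B j * (shg A (Suc j) * yg A (Suc j) * shg B (Suc j)) * sg B j
      * shg A (Suc j)"
    by (simp add: twist_def mult.assoc)
  also have "\<dots> = shg B (Suc j) * (sg B j * yg B (Suc (Suc j)) * sg B j) * shg A (Suc j)
      + shg B (Suc j) * sg B j * eg B (Suc j) * sg B j * shg A (Suc j)"
    by (simp only: yg_conj_shg[OF e_Suc]) (simp add: distrib_left distrib_right mult.assoc)
  also have "\<dots> = twisted_y A j"
    by (simp only: sBs sBA eBe) (simp add: twisted_y_def mult.assoc)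
  finally show ?thesis .
qed

lemma bubble_Suc_eq_lower_bubble: "bubble (Suc j) k A = lower_bubble j 0 k A"
proof -
  have twisted_yp: "twist A j * yp A (Suc j) k * twist A j = pow_on A (twisted_y A j) k"
    using conj_yp[of "twist A j" "twist A j" A] twist_twist twist_yg_twist by simp
  have "bubble (Suc j) k A
    = eg A (Suc j) * (eg A j * eg A (Suc j)) * yp A (Suc j) k * (eg A (Suc j) * eg A j)
      * eg A (Suc j)"
    using rel6g[OF e_j e_Suc] by (simp add: mult.assoc)
  also have "\<dots> = eg A (Suc j) * (eg A j * twist A j) * yp A (Suc j) k * (twist A j * eg A j)
      * eg A (Suc j)"
    by (simp only: eg_Suc_eg eg_eg_Suc)
  also have "\<dots> = eg A (Suc j) * eg A j * (twist A j * yp A (Suc j) k * twist A j) * eg A j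
      * eg A (Suc j)"
    by (simp only: mult.assoc)
  also have "\<dots> = lower_bubble j 0 k A"
    by (simp add: twisted_yp lower_bubble_def)
  finally show ?thesis .
qed

lemma lower_bubble_Suc:
  "lower_bubble j m (Suc n) A = - lower_bubble j (Suc m) n A - yp A j m * mixed_bubble j 0 n A
    + eg A (Suc j) * bubble j m A * pow_on A (twisted_y A j) n * eg A j * eg A (Suc j)"
proof -
  let ?e = "eg A (Suc j) * eg A j * yp A j m"
  have "A \<in> Seq r t" using e_j by simp
  then have "?e * yg A (Suc j) = eg A (Suc j) * (eg A j * yg A (Suc j)) * yp A j m"
    by (simp only: mult.assoc yg_yp_commute)
  also have "\<dots> = - (eg A (Suc j) * (eg A j * yg A j) * yp A j m)"
    by (simp only: rel8a[OF e_j] mult_minus_left mult_minus_right)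
  finally have y: "?e * yg A (Suc j) = - (eg A (Suc j) * eg A j * yp A j (Suc m))"
    by (simp add: mult.assoc)
  have yp_eg: "eg A (Suc j) * yp A j m = yp A j m * eg A (Suc j)"
    by (rule eg_yp_commute) (use e_j e_Suc in auto)
  have "?e * eg A (Suc j) = eg A (Suc j) * eg A j * eg A (Suc j) * yp A j m"
    by (simp only: mult.assoc yp_eg)
  then have e: "?e * eg A (Suc j) = yp A j m * eg A (Suc j)"
    by (simp only: rel6g[OF e_j e_Suc] yp_eg)
  have split: "lower_bubble j m (Suc n) A
    = (?e * twisted_y A j) * (pow_on A (twisted_y A j) n * eg A j * eg A (Suc j))"
    by (simp add: lower_bubble_def mult.assoc)
  have "?e * twisted_y A j = ?e * yg A (Suc j) - ?e * eg A (Suc j) + ?e * eg A j"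
    by (simp add: twisted_y_def distrib_left right_diff_distrib)
  also have "\<dots> = - (eg A (Suc j) * eg A j * yp A j (Suc m)) - yp A j m * eg A (Suc j)
      + eg A (Suc j) * bubble j m A"
    by (simp only: y e) (simp add: mult.assoc)
  finally show ?thesis
    unfolding split
    by (simp add: lower_bubble_def mixed_bubble_def distrib_right left_diff_distrib mult.assoc)
qed

lemma eg_Suc_yp_Suc_eg:
  "eg A (Suc j) * yp A (Suc j) m * eg A j
    = cscale ((-1) ^ m) (yp A j m * (eg A (Suc j) * eg A j))"
proof -
  have "eg A (Suc j) * yp A (Suc j) m = cscale ((-1) ^ m) (eg A (Suc j) * yp A (Suc (Suc j)) m)"
    by (rule mult_yp_sign) (use rel8a[OF e_Suc] e_Suc in auto)
  moreover have "eg A j * yp A (Suc (Suc j)) m = yp A (Suc (Suc j)) m * eg A j"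
    by (rule eg_yp_commute) (use e_j e_Suc in auto)
  moreover have "eg A (Suc j) * eg A j * yp A (Suc (Suc j)) m = yp A j m * (eg A (Suc j) * eg A j)"
  proof (rule mult_yp_commute)
    have "eg A j * yg A (Suc (Suc j)) = yg A (Suc (Suc j)) * eg A j"
      by (rule rel5c) (use e_j e_Suc in auto)
    then have "eg A (Suc j) * eg A j * yg A (Suc (Suc j)) = eg A (Suc j) * yg A (Suc (Suc j)) * eg A j"
      by (simp add: mult.assoc)
    also have "\<dots> = - (eg A (Suc j) * (yg A (Suc j) * eg A j))"
      by (simp only: rel8a[OF e_Suc] mult_minus_left mult.assoc)
    also have "\<dots> = eg A (Suc j) * yg A j * eg A j"
      by (simp add: rel8b[OF e_j] mult.assoc)
    also have "\<dots> = yg A j * (eg A (Suc j) * eg A j)"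
      using rel5c[OF e_Suc, of j] e_j by (simp add: mult.assoc[symmetric])
    finally show "eg A (Suc j) * eg A j * yg A (Suc (Suc j)) = yg A j * (eg A (Suc j) * eg A j)" .
  qed (simp_all add: mult.assoc[symmetric])
  ultimately show ?thesis
    by (simp add: cscale_mult_left mult.assoc)
qed

lemma mixed_bubble_0: "mixed_bubble j m 0 A = cscale ((-1) ^ m) (yp A j m * eg A (Suc j))"
proof -
  have "mixed_bubble j m 0 A = eg A (Suc j) * yp A (Suc j) m * eg A j * eg A (Suc j)"
    by (simp add: mixed_bubble_def mult.assoc)
  also have "\<dots> = cscale ((-1) ^ m) (yp A j m * (eg A (Suc j) * eg A j)) * eg A (Suc j)"
    by (simp only: eg_Suc_yp_Suc_eg)
  also have "\<dots> = cscale ((-1) ^ m) (yp A j m * eg A (Suc j))"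
    using rel6g[OF e_j e_Suc] by (simp add: cscale_mult_left mult.assoc)
  finally show ?thesis .
qed

lemma mixed_bubble_Suc:
  "mixed_bubble j m (Suc n) A = mixed_bubble j (Suc m) n A
    - bubble (Suc j) m A * pow_on A (twisted_y A j) n * eg A j * eg A (Suc j)
    + cscale ((-1) ^ m) (yp A j m * lower_bubble j 0 n A)"
proof -
  let ?e = "eg A (Suc j) * yp A (Suc j) m"
  have split: "mixed_bubble j m (Suc n) A
    = (?e * twisted_y A j) * (pow_on A (twisted_y A j) n * eg A j * eg A (Suc j))"
    by (simp add: mixed_bubble_def mult.assoc)
  have "?e * twisted_y A j = ?e * yg A (Suc j) - ?e * eg A (Suc j) + ?e * eg A j"
    by (simp add: twisted_y_def distrib_left right_diff_distrib)
  also have "\<dots> = ?e * yg A (Suc j) - bubble (Suc j) m A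
      + cscale ((-1) ^ m) (yp A j m * (eg A (Suc j) * eg A j))"
    by (simp only: eg_Suc_yp_Suc_eg)
  finally show ?thesis
    unfolding split
    by (simp del: yp_Suc add: yp_Suc' lower_bubble_def mixed_bubble_def distrib_right
        left_diff_distrib mult.assoc cscale_mult_left cscale_mult_right)
qed

end

context
  fixes j :: nat and p :: "int list"
  assumes alternating: "length p = Suc j" "1 \<le> j" "p ! (j - 1) \<noteq> p ! j"
    and lower_bubbles: "\<And>m. poly_multiple j (take j p) (bubble j m)"
begin

lemma alternating_e_seqs:
  assumes "A \<in> e_seqs (Suc j) p"
  shows "A \<in> e_seqs j (take j p)" "has_e A j" "has_e A (Suc j)"
proof -
  have A: "has_e A (Suc j)" "take (Suc j) A = p" using assms by (simp_all add: mem_e_seqs)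
  then have "A ! (j - 1) = p ! (j - 1)" "A ! j = p ! j" "take j A = take j p"
    by (auto simp: min_def)
  with A alternating show "A \<in> e_seqs j (take j p)" "has_e A j" "has_e A (Suc j)"
    by (auto simp: mem_e_seqs)
qed

lemma lower_bubble_coeff:
  "\<exists>Q. vars_below (Suc j) Q \<and> (\<forall>A \<in> e_seqs (Suc j) p. bubble j m A = pv A Q * eg A j)"
proof -
  obtain Q where "vars_below j Q" "\<forall>A \<in> e_seqs j (take j p). bubble j m A = pv A Q * eg A j"
    using lower_bubbles[of m] unfolding poly_multiple_def by blast
  then show ?thesis
    by (intro exI[of _ Q]) (auto intro: vars_below_mono dest: alternating_e_seqs(1))
qed

lemma vars_below_y_power_alternating: "vars_below (Suc j) (y_power j m)"
  using alternating by (simp add: vars_below_y_power)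

lemma poly_multiple_lower_bubble_0: "poly_multiple (Suc j) p (lower_bubble j m 0)"
proof -
  obtain Q where Q: "vars_below (Suc j) Q" "\<forall>A \<in> e_seqs (Suc j) p. bubble j m A = pv A Q * eg A j"
    using lower_bubble_coeff by blast
  show ?thesis
  proof (rule poly_multipleI[OF Q(1)])
    fix A assume A: "A \<in> e_seqs (Suc j) p"
    note e = alternating_e_seqs(2,3)[OF A]
    have "lower_bubble j m 0 A = eg A (Suc j) * bubble j m A * eg A (Suc j)"
      by (simp add: lower_bubble_def mult.assoc)
    also have "\<dots> = pv A Q * (eg A (Suc j) * eg A j * eg A (Suc j))"
      using Q(2) A eg_pv_commute[OF e(2) Q(1)] by (simp add: mult.assoc[symmetric])
    finally show "lower_bubble j m 0 A = pv A Q * eg A (Suc j)"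
      by (simp add: rel6g[OF e])
  qed
qed

lemma poly_multiple_mixed_bubble_0: "poly_multiple (Suc j) p (mixed_bubble j m 0)"
proof (rule poly_multipleI[of _ "poly_scale ((-1) ^ m) (y_power j m)"])
  show "vars_below (Suc j) (poly_scale ((-1) ^ m) (y_power j m))"
    by (simp add: vars_below_y_power_alternating)
  fix A assume "A \<in> e_seqs (Suc j) p"
  then show "mixed_bubble j m 0 A = pv A (poly_scale ((-1) ^ m) (y_power j m)) * eg A (Suc j)"
    using alternating alternating_e_seqs(2,3)
    by (simp add: mixed_bubble_0 pv_poly_scale pv_y_power cscale_mult_left)
qed

lemma poly_multiple_lower_bubble_Suc:
  assumes "poly_multiple (Suc j) p (lower_bubble j (Suc m) n)"
    and "poly_multiple (Suc j) p (mixed_bubble j 0 n)" "poly_multiple (Suc j) p (lower_bubble j 0 n)"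
  shows "poly_multiple (Suc j) p (lower_bubble j m (Suc n))"
proof -
  obtain Q where Q: "vars_below (Suc j) Q" "\<forall>A \<in> e_seqs (Suc j) p. bubble j m A = pv A Q * eg A j"
    using lower_bubble_coeff by blast
  show ?thesis
  proof (rule poly_multiple_cong[OF poly_multiple_add[OF poly_multiple_diff[OF
          poly_multiple_uminus[OF assms(1)] poly_multiple_pv_mult[OF vars_below_y_power_alternating
          assms(2)]] poly_multiple_pv_mult[OF Q(1) assms(3)]]])
    fix A assume A: "A \<in> e_seqs (Suc j) p"
    note e = alternating_e_seqs(2,3)[OF A]
    have "eg A (Suc j) * bubble j m A = pv A Q * (eg A (Suc j) * eg A j)"
      using Q(2) A eg_pv_commute[OF e(2) Q(1)] by (simp add: mult.assoc[symmetric])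
    then show "lower_bubble j m (Suc n) A = - lower_bubble j (Suc m) n A
      - pv A (y_power j m) * mixed_bubble j 0 n A + pv A Q * lower_bubble j 0 n A"
      unfolding lower_bubble_Suc[OF e]
      using alternating by (simp add: pv_y_power lower_bubble_def mult.assoc)
  qed
qed

lemma poly_multiple_mixed_bubble_Suc:
  assumes "poly_multiple (Suc j) p (bubble (Suc j) m)"
    and "poly_multiple (Suc j) p (mixed_bubble j (Suc m) n)"
    and "poly_multiple (Suc j) p (mixed_bubble j 0 n)" "poly_multiple (Suc j) p (lower_bubble j 0 n)"
  shows "poly_multiple (Suc j) p (mixed_bubble j m (Suc n))"
proof -
  obtain B where B: "vars_below (Suc j) B"
    "\<forall>A \<in> e_seqs (Suc j) p. bubble (Suc j) m A = pv A B * eg A (Suc j)"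
    using assms(1) unfolding poly_multiple_def by blast
  show ?thesis
  proof (rule poly_multiple_cong[OF poly_multiple_add[OF poly_multiple_diff[OF
          assms(2) poly_multiple_pv_mult[OF B(1) assms(3)]]
          poly_multiple_scale[OF poly_multiple_pv_mult[OF vars_below_y_power_alternating assms(4)]]]])
    fix A assume A: "A \<in> e_seqs (Suc j) p"
    show "mixed_bubble j m (Suc n) A = mixed_bubble j (Suc m) n A
      - pv A B * mixed_bubble j 0 n A
      + cscale ((-1) ^ m) (pv A (y_power j m) * lower_bubble j 0 n A)"
      unfolding mixed_bubble_Suc[OF alternating_e_seqs(2,3)[OF A]]
      using alternating B(2) A by (simp add: pv_y_power mixed_bubble_def mult.assoc)
  qed
qed

text \<open>Expanding e_(j+1) e_j (y_(j+1) - e_(j+1) + e_j)^k e_j e_(j+1) only ever calls for bubbles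
  e_(j+1) y_(j+1)^m e_(j+1) with m < k, because m + n never increases.\<close>

lemma poly_multiple_lower_mixed:
  assumes smaller: "\<And>m. m < k \<Longrightarrow> poly_multiple (Suc j) p (bubble (Suc j) m)"
  shows "(m + n \<le> k \<longrightarrow> poly_multiple (Suc j) p (lower_bubble j m n))
    \<and> (m + n < k \<longrightarrow> poly_multiple (Suc j) p (mixed_bubble j m n))"
proof (induction n arbitrary: m)
  case 0
  show ?case by (simp add: poly_multiple_lower_bubble_0 poly_multiple_mixed_bubble_0)
next
  case (Suc n)
  then show ?case
    by (auto intro!: poly_multiple_lower_bubble_Suc poly_multiple_mixed_bubble_Suc smaller)
qed

lemma poly_multiple_bubble_alternating: "poly_multiple (Suc j) p (bubble (Suc j) k)"
proof (induction k rule: less_induct)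
  case (less k)
  have "poly_multiple (Suc j) p (lower_bubble j 0 k)"
    using poly_multiple_lower_mixed[OF less, where m = 0 and n = k] by simp
  then show ?case
  proof (rule poly_multiple_cong)
    fix A assume "A \<in> e_seqs (Suc j) p"
    then show "bubble (Suc j) k A = lower_bubble j 0 k A"
      by (intro bubble_Suc_eq_lower_bubble alternating_e_seqs(2,3))
  qed
qed

end

section \<open>Induction on the position of the cap\<close>

lemma poly_multiple_bubble_one: "poly_multiple 1 [1] (bubble 1 k)"
proof (rule poly_multipleI[of _ "const_poly (\<omega> k)"])
  show "vars_below 1 (const_poly (\<omega> k))" by (simp add: vars_below_const_poly)
  fix A assume A: "A \<in> e_seqs 1 [1]"
  then have "A ! 0 = 1" by (metis mem_e_seqs nth_Cons_0 nth_take zero_less_one)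
  moreover have "A ! 1 = -1" using A calculation Seq_nth[of A r t 1] by (auto simp: mem_e_seqs)
  ultimately have "bubble 1 k A = cscale (\<omega> k) (eg A 1)"
    using A by (intro rel4) (auto simp: mem_e_seqs)
  then show "bubble 1 k A = pv A (const_poly (\<omega> k)) * eg A 1"
    by (simp add: pv_const_poly cscale_mult_left)
qed

lemma poly_multiple_bubble_first: "poly_multiple 1 p (bubble 1 k)"
proof (cases "p = [1]")
  case True
  then show ?thesis using poly_multiple_bubble_one by (simp only:)
next
  case False
  show ?thesis
  proof (rule poly_multiple_bubble_swp[OF _ poly_multiple_bubble_one])
    fix A assume "A \<in> e_seqs 1 p"
    then have e: "has_e A 1" and "take 1 A = p" by (simp_all add: mem_e_seqs)
    moreover have "take 1 A = [A ! 0]" using e by (cases A) (auto dest: Seq_length)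
    moreover have "0 < r + t" "1 < r + t" "length A = r + t" using e by (auto simp: Seq_length)
    ultimately have "A ! 1 = 1" using False e Seq_nth[of A r t 0] Seq_nth[of A r t 1] by auto
    then show "swp 1 A \<in> e_seqs 1 [1]"
      using e \<open>length A = r + t\<close> has_e_swp(1)[OF e] take_swp[of 1 A] by (simp add: mem_e_seqs)
  qed
qed

lemma poly_multiple_bubble_Suc:
  assumes "1 \<le> j" and lower: "\<And>p k. poly_multiple j p (bubble j k)"
  shows "poly_multiple (Suc j) p (bubble (Suc j) k)"
proof (cases "e_seqs (Suc j) p = {}")
  case True
  then show ?thesis by (rule poly_multiple_empty)
next
  case False
  then obtain A0 where "A0 \<in> e_seqs (Suc j) p" by blast
  then have "has_e A0 (Suc j)" "take (Suc j) A0 = p" by (simp_all add: mem_e_seqs)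
  then have length_p: "length p = Suc j" and "p ! j = 1 \<or> p ! j = -1"
    using Seq_nth[of A0 r t j] by (auto simp: Seq_length)
  show ?thesis
  proof (cases "p ! (j - 1) = p ! j")
    case False
    show ?thesis by (rule poly_multiple_bubble_alternating[OF length_p \<open>1 \<le> j\<close> False lower])
  next
    case True
    define p' where "p' = take j p @ [- p ! j]"
    have "p' ! (j - 1) = p ! (j - 1)" "p' ! j = - p ! j"
      using length_p \<open>1 \<le> j\<close> by (simp_all add: p'_def nth_append)
    then have p': "length p' = Suc j" "p' ! (j - 1) \<noteq> p' ! j" "take j p' = take j p"
      using length_p True \<open>p ! j = 1 \<or> p ! j = -1\<close> by (auto simp: p'_def)
    show ?thesis
    proof (rule poly_multiple_bubble_swp)
      show "poly_multiple (Suc j) p' (bubble (Suc j) k)" for k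
        using poly_multiple_bubble_alternating[OF p'(1) \<open>1 \<le> j\<close> p'(2) lower] by (simp add: p'(3))
      fix A assume A: "A \<in> e_seqs (Suc j) p"
      then have e: "has_e A (Suc j)" and prefix: "take (Suc j) A = p" by (simp_all add: mem_e_seqs)
      have "take j A = take j p" "A ! j = p ! j" using prefix by auto
      moreover have "A ! Suc j = - A ! j"
        using e by (intro Seq_nth_neq[of A r t j "Suc j"]) auto
      moreover have "Suc j < length A" using e by (auto dest: Seq_length)
      ultimately have "take (Suc j) (swp (Suc j) A) = p'"
        using take_swp[of "Suc j" A] by (simp add: p'_def)
      then show "swp (Suc j) A \<in> e_seqs (Suc j) p'"
        using has_e_swp(1)[OF e] by (simp add: mem_e_seqs)
    qed
  qed
qed

lemma poly_multiple_bubble: "1 \<le> i \<Longrightarrow> poly_multiple i p (bubble i k)"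
proof (induction i arbitrary: p k rule: nat_induct_at_least)
  case base
  then show ?case by (rule poly_multiple_bubble_first)
next
  case (Suc j)
  then show ?case by (intro poly_multiple_bubble_Suc)
qed

lemma uniform_bubble_coefficients:
  "\<exists>W. \<forall>pre k. vars_below (length pre) (W pre k) \<and>
    (\<forall>A \<in> e_seqs (length pre) pre. bubble (length pre) k A = pv A (W pre k) * eg A (length pre))"
proof -
  have "\<exists>P. vars_below (length pre) P \<and>
    (\<forall>A \<in> e_seqs (length pre) pre. bubble (length pre) k A = pv A P * eg A (length pre))"
    for pre k
  proof (cases "length pre = 0")
    case True
    then have "e_seqs (length pre) pre = {}" by (auto simp: mem_e_seqs)
    then show ?thesis by (intro exI[of _ "[]"]) simp
  next
    case False
    then show ?thesis using poly_multiple_bubble[of "length pre" pre k]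
      by (simp add: poly_multiple_def Suc_le_eq)
  qed
  then show ?thesis by metis
qed

end

theorem mainTheorem5:
  fixes r t :: nat and \<omega> :: "nat \<Rightarrow> complex"
  shows "\<exists>W :: int list \<Rightarrow> nat \<Rightarrow> (complex \<times> nat list) list.
     (\<forall>pre k c e. (c, e) \<in> set (W pre k) \<longrightarrow> length e < length pre) \<and>
     (\<forall>A i k. A \<in> Seq r t \<longrightarrow> 1 \<le> i \<longrightarrow> i < r + t \<longrightarrow> A ! (i - 1) \<noteq> A ! i \<longrightarrow>
        veq r t \<omega> (Comp (Eg A i) (Comp (ypow A i k) (Eg A i)))
                  (Comp (peval A (W (take i A) k)) (Eg A i)))"
proof -
  interpret affine_walled_brauer r t \<omega> .
  obtain W where W: "\<And>pre k. vars_below (length pre) (W pre k)"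
    "\<And>pre k A. A \<in> e_seqs (length pre) pre \<Longrightarrow>
      bubble (length pre) k A = pv A (W pre k) * eg A (length pre)"
    using uniform_bubble_coefficients by metis
  show ?thesis
  proof (intro exI[of _ W] conjI allI impI)
    fix pre k c e assume "(c, e) \<in> set (W pre k)"
    then show "length e < length pre" using W(1)[of pre k] by (auto simp: vars_below_def)
  next
    fix A i k
    assume "A \<in> Seq r t" "1 \<le> i" "i < r + t" "A ! (i - 1) \<noteq> A ! i"
    then have "A \<in> e_seqs (length (take i A)) (take i A)" "length (take i A) = i"
      by (simp_all add: mem_e_seqs Seq_length)
    then have "bubble i k A = pv A (W (take i A) k) * eg A i"
      using W(2) by metis
    then show "veq r t \<omega> (Comp (Eg A i) (Comp (ypow A i k) (Eg A i)))
      (Comp (peval A (W (take i A) k)) (Eg A i))"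
      by (simp add: vb_class_Comp mult.assoc flip: vb_class_eq_iff)
  qed
qed

end
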